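(* For $n\ge1$, $\left|\Pi_n\wr C_2(1^11^1,1^11^2,1^12^2)\right|=\sum_{k=0}^n\binom{n}{k}\left\lfloor k/2 \right\rfloor!$.
   Context: For $n\ge0$ let $[n]=\{1,\dots,n\}$. A $2$-colored set partition of $[n]$ is a set partition of $[n]$ together with an assignment of a color from $\{1,2\}$ to each element; $\Pi_n\wr C_2$ is the set of these. For a set $S$ of patterns, $\Pi_n\wr C_2(S)$ is the set of such colored partitions avoiding every pattern in $S$ in the pattern sense. For the patterns used here: $\sigma$ contains $1^11^1$ iff two elements in the same block have the same color; $1^11^2$ iff there are $i<j$ in the same block with $i$ colored $1$ and $j$ colored $2$; $1^12^2$ iff there are $i<j$ in different blocks with $i$ colored $1$ and $j$ colored $2$. *)

theory Defs
  imports Main "HOL-Library.Disjoint_Sets" "HOL-Library.FuncSet"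
begin

text \<open>A 2-colored set partition of [n] is a pair (P, c): P a set partition of {1..n}
  and c a coloring {1..n} -> {1,2} (extensional: c is undefined outside [n]).\<close>

definition colored_partitions :: "nat \<Rightarrow> (nat set set \<times> (nat \<Rightarrow> nat)) set" where
  "colored_partitions n =
     {(P, c). partition_on {1..n} P \<and> c \<in> {1..n} \<rightarrow>\<^sub>E {1, 2}}"

definition same_block :: "nat set set \<Rightarrow> nat \<Rightarrow> nat \<Rightarrow> bool" where
  "same_block P i j \<longleftrightarrow> (\<exists>B\<in>P. i \<in> B \<and> j \<in> B)"

definition contains_1111 :: "nat \<Rightarrow> nat set set \<times> (nat \<Rightarrow> nat) \<Rightarrow> bool" where
  "contains_1111 n \<sigma> = (case \<sigma> of (P, c) \<Rightarrow>
     (\<exists>i\<in>{1..n}. \<exists>j\<in>{1..n}. i \<noteq> j \<and> same_block P i j \<and> c i = c j))"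

definition contains_1112 :: "nat \<Rightarrow> nat set set \<times> (nat \<Rightarrow> nat) \<Rightarrow> bool" where
  "contains_1112 n \<sigma> = (case \<sigma> of (P, c) \<Rightarrow>
     (\<exists>i\<in>{1..n}. \<exists>j\<in>{1..n}. i < j \<and> same_block P i j \<and> c i = 1 \<and> c j = 2))"

definition contains_1122 :: "nat \<Rightarrow> nat set set \<times> (nat \<Rightarrow> nat) \<Rightarrow> bool" where
  "contains_1122 n \<sigma> = (case \<sigma> of (P, c) \<Rightarrow>
     (\<exists>i\<in>{1..n}. \<exists>j\<in>{1..n}. i < j \<and> \<not> same_block P i j \<and> c i = 1 \<and> c j = 2))"

end

theory Submission
  imports Defs
begin

text \<open>Avoiding both \<open>1\<^sup>11\<^sup>2\<close> and \<open>1\<^sup>12\<^sup>2\<close> means that no element coloured 1 precedes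
  an element coloured 2, so the colouring is \<open>2\<dots>21\<dots>1\<close> with some threshold \<open>m\<close>. Avoiding
  \<open>1\<^sup>11\<^sup>1\<close> then says that every block contains at most one element of each colour, so the
  partition is a partial matching between \<open>{1..m}\<close> and \<open>{m+1..n}\<close>. There are
  \<open>\<Sum>\<^sub>r C(m,r) C(n-m,r) r!\<close> of these, and summing over \<open>m\<close> with a Vandermonde-type identity
  \<open>\<Sum>\<^sub>m C(m,r) C(n-m,r) = C(n+1,2r+1)\<close> and Pascal's rule gives \<open>\<Sum>\<^sub>k C(n,k) \<lfloor>k/2\<rfloor>!\<close>.\<close>

lemma partition_on_Diff_block:
  assumes "partition_on A P" "B \<in> P"
  shows "partition_on (A - B) (P - {B})"
proof -
  have "disjnt B (\<Union>(P - {B}))"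
    using assms by (auto simp: partition_on_def disjoint_def disjnt_def)
  moreover have "P = insert B (P - {B})" using assms(2) by blast
  ultimately show ?thesis using assms(1) partition_on_insert by metis
qed

definition matching_partitions :: "'a set \<Rightarrow> 'a set \<Rightarrow> 'a set set set" where
  "matching_partitions L R =
     {P. partition_on (L \<union> R) P \<and> (\<forall>B\<in>P. (\<exists>x. B = {x}) \<or> (\<exists>l\<in>L. \<exists>r\<in>R. B = {l, r}))}"

lemma finite_matching_partitions:
  "finite L \<Longrightarrow> finite R \<Longrightarrow> finite (matching_partitions L R)"
  by (rule finite_subset[OF _ finitely_many_partition_on[of "L \<union> R"]])
     (auto simp: matching_partitions_def)

lemma Union_matching_partitions: "P \<in> matching_partitions L R \<Longrightarrow> \<Union>P = L \<union> R"
  by (auto simp: matching_partitions_def partition_on_def)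

lemma matching_partitions_iff:
  assumes P: "partition_on (L \<union> R) P" and LR: "L \<inter> R = {}"
  shows "P \<in> matching_partitions L R \<longleftrightarrow>
           (\<forall>B\<in>P. \<forall>x\<in>B. \<forall>y\<in>B. x \<noteq> y \<longrightarrow> (x \<in> L \<longleftrightarrow> y \<notin> L))"
proof
  assume "P \<in> matching_partitions L R"
  then show "\<forall>B\<in>P. \<forall>x\<in>B. \<forall>y\<in>B. x \<noteq> y \<longrightarrow> (x \<in> L \<longleftrightarrow> y \<notin> L)"
    using LR by (fastforce simp: matching_partitions_def)
next
  assume split: "\<forall>B\<in>P. \<forall>x\<in>B. \<forall>y\<in>B. x \<noteq> y \<longrightarrow> (x \<in> L \<longleftrightarrow> y \<notin> L)"
  have "(\<exists>x. B = {x}) \<or> (\<exists>l\<in>L. \<exists>r\<in>R. B = {l, r})" if B: "B \<in> P" for B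
  proof -
    have "B \<subseteq> L \<union> R" "B \<noteq> {}" using P B by (auto simp: partition_on_def)
    then obtain x where x: "x \<in> B" by blast
    show ?thesis
    proof (cases "B = {x}")
      case False
      then obtain y where y: "y \<in> B" "y \<noteq> x" using x by blast
      \<comment> \<open>a third element would lie on a side different from both x and y\<close>
      have "z \<in> {x, y}" if "z \<in> B" for z
        using split B x y that by (metis insertCI)
      then have "B = {x, y}" using x y by blast
      then show ?thesis using split B x y \<open>B \<subseteq> L \<union> R\<close> by (metis UnE insert_commute subsetD)
    qed blast
  qed
  then show "P \<in> matching_partitions L R" using P by (simp add: matching_partitions_def)
qed

lemma matching_partitions_insert_block:
  assumes P: "P \<in> matching_partitions (L - {l}) R" and l: "l \<in> insert r L"
    and r: "r \<notin> L" "r \<notin> R" and LR: "L \<inter> R = {}"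
  shows "insert {l, r} P \<in> matching_partitions L (insert r R)"
proof -
  have "disjnt {l, r} (\<Union>P)" using Union_matching_partitions[OF P] l r LR by (auto simp: disjnt_def)
  moreover have "L \<union> insert r R - {l, r} = (L - {l}) \<union> R" using l r LR by auto
  ultimately have "partition_on (L \<union> insert r R) (insert {l, r} P)"
    using P l by (auto simp: matching_partitions_def partition_on_insert)
  then show ?thesis using P l by (auto simp: matching_partitions_def)
qed

lemma matching_partitions_remove_block:
  assumes Q: "Q \<in> matching_partitions L (insert r R)"
    and r: "r \<notin> L" "r \<notin> R" and LR: "L \<inter> R = {}"
  obtains l where "l \<in> insert r L" "{l, r} \<in> Q" "Q - {{l, r}} \<in> matching_partitions (L - {l}) R"
proof -
  have pQ: "partition_on (L \<union> insert r R) Q" and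
    blocks: "\<forall>B\<in>Q. (\<exists>x. B = {x}) \<or> (\<exists>l\<in>L. \<exists>r'\<in>insert r R. B = {l, r'})"
    using Q by (auto simp: matching_partitions_def)
  obtain B where B: "B \<in> Q" "r \<in> B" using pQ by (auto simp: partition_on_def)
  then obtain l where l: "l \<in> insert r L" "B = {l, r}" using blocks r by fastforce
  have "partition_on (L \<union> insert r R - B) (Q - {B})" by (rule partition_on_Diff_block[OF pQ B(1)])
  moreover have "L \<union> insert r R - B = (L - {l}) \<union> R" using l r LR by auto
  moreover have "l \<notin> C \<and> r \<notin> C" if "C \<in> Q - {B}" for C
  proof -
    have "C \<inter> B = {}" using pQ B that by (auto simp: partition_on_def disjoint_def)
    then show ?thesis using l by auto
  qed
  ultimately have "Q - {B} \<in> matching_partitions (L - {l}) R"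
    using blocks by (fastforce simp: matching_partitions_def)
  then show ?thesis using that l B by blast
qed

text \<open>The index \<open>l = r\<close> accounts for the block \<open>{r, r} = {r}\<close>, since \<open>L - {r} = L\<close>.\<close>

lemma matching_partitions_insert:
  assumes r: "r \<notin> L" "r \<notin> R" and LR: "L \<inter> R = {}"
  shows "matching_partitions L (insert r R) =
           (\<Union>l\<in>insert r L. insert {l, r} ` matching_partitions (L - {l}) R)"
proof
  show "matching_partitions L (insert r R) \<subseteq>
          (\<Union>l\<in>insert r L. insert {l, r} ` matching_partitions (L - {l}) R)"
  proof
    fix Q assume "Q \<in> matching_partitions L (insert r R)"
    then obtain l where l: "l \<in> insert r L" "{l, r} \<in> Q"
      and rest: "Q - {{l, r}} \<in> matching_partitions (L - {l}) R"
      using matching_partitions_remove_block r LR by metis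
    have "Q = insert {l, r} (Q - {{l, r}})" using l(2) by blast
    then show "Q \<in> (\<Union>l\<in>insert r L. insert {l, r} ` matching_partitions (L - {l}) R)"
      using l(1) rest by blast
  qed
next
  show "(\<Union>l\<in>insert r L. insert {l, r} ` matching_partitions (L - {l}) R) \<subseteq>
          matching_partitions L (insert r R)"
    using matching_partitions_insert_block[OF _ _ r LR] by (intro UN_least image_subsetI)
qed

lemma matching_partitions_empty_right: "matching_partitions L {} = {(\<lambda>x. {x}) ` L}"
proof (intro equalityI subsetI)
  fix P assume "P \<in> matching_partitions L {}"
  then have U: "\<Union>P = L" and singletons: "\<forall>B\<in>P. \<exists>x. B = {x}"
    by (auto simp: matching_partitions_def partition_on_def)
  have "{x} \<in> P" if "x \<in> L" for x
    using U singletons that by (metis UnionE singletonD)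
  moreover have "P \<subseteq> (\<lambda>x. {x}) ` L" using U singletons by fastforce
  ultimately show "P \<in> {(\<lambda>x. {x}) ` L}" by blast
qed (use partition_on_singletons in \<open>auto simp: matching_partitions_def\<close>)

text \<open>A matching with \<open>r\<close> edges: choose its endpoints on both sides and a bijection between them.\<close>

definition bipartite_matchings :: "nat \<Rightarrow> nat \<Rightarrow> nat" where
  "bipartite_matchings a b = (\<Sum>r\<le>b. (a choose r) * (b choose r) * fact r)"

lemma choose_mult_fact_Suc: "(a choose Suc r) * fact (Suc r) = a * ((a - 1) choose r) * fact r"
proof (cases a)
  case (Suc a')
  have "(a choose Suc r) * fact (Suc r) = (Suc r * (Suc a' choose Suc r)) * fact r"
    using Suc by (simp only: fact_Suc of_nat_id mult.commute mult.left_commute)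
  also have "\<dots> = a * ((a - 1) choose r) * fact r"
    using Suc_times_binomial[of r a'] Suc by simp
  finally show ?thesis .
qed simp

lemma bipartite_matchings_Suc:
  "bipartite_matchings a (Suc b) = bipartite_matchings a b + a * bipartite_matchings (a - 1) b"
proof -
  have "bipartite_matchings a b = 1 + (\<Sum>r\<le>b. (a choose Suc r) * (b choose Suc r) * fact (Suc r))"
  proof -
    have "bipartite_matchings a b = (\<Sum>r\<le>Suc b. (a choose r) * (b choose r) * fact r)"
      unfolding bipartite_matchings_def by (simp add: sum.atMost_Suc)
    then show ?thesis unfolding sum.atMost_Suc_shift by simp
  qed
  moreover have "bipartite_matchings a (Suc b) =
      1 + (\<Sum>r\<le>b. (a choose Suc r) * (b choose Suc r) * fact (Suc r))
        + (\<Sum>r\<le>b. (a choose Suc r) * (b choose r) * fact (Suc r))"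
    unfolding bipartite_matchings_def sum.atMost_Suc_shift by (simp add: algebra_simps sum.distrib)
  moreover have "(\<Sum>r\<le>b. (a choose Suc r) * (b choose r) * fact (Suc r))
      = a * bipartite_matchings (a - 1) b"
    unfolding bipartite_matchings_def sum_distrib_left
    by (rule sum.cong[OF refl]) (metis choose_mult_fact_Suc mult.assoc mult.commute)
  ultimately show ?thesis by simp
qed

lemma card_matching_partitions:
  "finite R \<Longrightarrow> finite L \<Longrightarrow> L \<inter> R = {} \<Longrightarrow>
     card (matching_partitions L R) = bipartite_matchings (card L) (card R)"
proof (induction R arbitrary: L rule: finite_induct)
  case empty
  then show ?case by (simp add: matching_partitions_empty_right bipartite_matchings_def)
next
  case (insert r R)
  have r: "r \<notin> L" "r \<notin> R" and LR: "L \<inter> R = {}" using insert by auto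
  define A where "A l = insert {l, r} ` matching_partitions (L - {l}) R" for l
  have card_A: "card (A l) = bipartite_matchings (card (L - {l})) (card R)" for l
  proof -
    have "{l, r} \<notin> P" if "P \<in> matching_partitions (L - {l}) R" for P
      using Union_matching_partitions[OF that] r by blast
    then have "inj_on (insert {l, r}) (matching_partitions (L - {l}) R)"
      unfolding inj_on_def by (metis Diff_insert_absorb)
    then show ?thesis
      unfolding A_def using insert.IH[of "L - {l}"] insert.prems LR
      by (simp add: card_image Diff_Int_distrib2)
  qed
  have "disjoint_family_on A (insert r L)"
    unfolding disjoint_family_on_def
  proof (intro ballI impI)
    fix l l' assume "l \<in> insert r L" "l' \<in> insert r L" "l \<noteq> l'"
    then have "{l, r} \<noteq> {l', r}" by (auto simp: doubleton_eq_iff)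
    moreover have "{l, r} \<notin> P'" if "P' \<in> matching_partitions (L - {l'}) R" for P'
      using Union_matching_partitions[OF that] r by blast
    ultimately show "A l \<inter> A l' = {}" unfolding A_def by blast
  qed
  moreover have "finite (A l)" for l
    unfolding A_def using insert.prems insert.hyps by (simp add: finite_matching_partitions)
  ultimately have "card (\<Union>l\<in>insert r L. A l) = (\<Sum>l\<in>insert r L. card (A l))"
    using insert.prems by (intro card_UN_disjoint') auto
  then have "card (matching_partitions L (insert r R)) = (\<Sum>l\<in>insert r L. card (A l))"
    by (simp only: matching_partitions_insert[OF r LR] A_def)
  also have "\<dots> = bipartite_matchings (card L) (card R)
                    + card L * bipartite_matchings (card L - 1) (card R)"
    using insert.prems r by (simp add: card_A sum.insert)
  finally show ?case using insert.hyps by (simp add: bipartite_matchings_Suc)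
qed

lemma sum_choose_mult_choose_diff:
  "(\<Sum>m\<le>n. (m choose a) * ((n - m) choose b)) = Suc n choose (a + b + 1)"
proof (induction n arbitrary: b)
  case 0
  then show ?case by (cases a; cases b; simp)
next
  case (Suc n)
  show ?case
  proof (cases b)
    case 0
    then show ?thesis using sum_choose_upper[of a "Suc n"] by simp
  next
    case (Suc b')
    have "(\<Sum>m\<le>Suc n. (m choose a) * ((Suc n - m) choose b))
        = (\<Sum>m\<le>n. (m choose a) * ((Suc n - m) choose b))"
      using Suc by (simp add: sum.atMost_Suc)
    also have "\<dots> = (\<Sum>m\<le>n. (m choose a) * ((n - m) choose b') + (m choose a) * ((n - m) choose b))"
      by (rule sum.cong[OF refl]) (simp add: Suc Suc_diff_le algebra_simps)
    also have "\<dots> = (Suc n choose (a + b' + 1)) + (Suc n choose (a + b + 1))"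
      by (simp add: sum.distrib Suc.IH)
    also have "\<dots> = Suc (Suc n) choose (a + b + 1)" using Suc by simp
    finally show ?thesis .
  qed
qed

lemma sum_lessThan_double: "(\<Sum>k<2 * (N::nat). f k) = (\<Sum>r<N. f (2 * r) + f (2 * r + 1))"
  by (induction N) (simp_all add: sum.atMost_Suc algebra_simps)

lemma sum_bipartite_matchings:
  "(\<Sum>m\<le>n. bipartite_matchings m (n - m)) = (\<Sum>k = 0..n. (n choose k) * fact (k div 2))"
proof -
  have "(\<Sum>m\<le>n. bipartite_matchings m (n - m))
      = (\<Sum>m\<le>n. \<Sum>r\<le>n. (m choose r) * ((n - m) choose r) * fact r)"
    unfolding bipartite_matchings_def by (intro sum.cong refl sum.mono_neutral_left) auto
  also have "\<dots> = (\<Sum>r\<le>n. fact r * (\<Sum>m\<le>n. (m choose r) * ((n - m) choose r)))"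
    by (subst sum.swap) (simp add: sum_distrib_left algebra_simps)
  also have "\<dots> = (\<Sum>r\<le>n. fact r * (Suc n choose (2 * r + 1)))"
    by (simp add: sum_choose_mult_choose_diff mult_2)
  \<comment> \<open>Pascal's rule splits each odd binomial into the even and odd terms of the target sum\<close>
  also have "\<dots> = (\<Sum>r<Suc n. (n choose (2 * r)) * fact (2 * r div 2)
                              + (n choose (2 * r + 1)) * fact ((2 * r + 1) div 2))"
    by (rule sum.cong) (auto simp: algebra_simps)
  also have "\<dots> = (\<Sum>k<2 * Suc n. (n choose k) * fact (k div 2))"
    by (rule sum_lessThan_double[symmetric])
  also have "\<dots> = (\<Sum>k = 0..n. (n choose k) * fact (k div 2))"
    by (rule sum.mono_neutral_right) auto
  finally show ?thesis .
qed

definition threshold_coloring :: "nat \<Rightarrow> nat \<Rightarrow> nat \<Rightarrow> nat" where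
  "threshold_coloring n m = (\<lambda>i\<in>{1..n}. if i \<le> m then 2 else 1)"

lemma threshold_coloring_PiE: "threshold_coloring n m \<in> {1..n} \<rightarrow>\<^sub>E {1, 2}"
  by (auto simp: threshold_coloring_def)

lemma inj_on_threshold_coloring: "inj_on (threshold_coloring n) {..n}"
proof
  fix m m' assume "m \<in> {..n}" "m' \<in> {..n}" and eq: "threshold_coloring n m = threshold_coloring n m'"
  show "m = m'"
  proof (rule ccontr)
    assume "m \<noteq> m'"
    then have "threshold_coloring n m (max m m') \<noteq> threshold_coloring n m' (max m m')"
      using \<open>m \<in> {..n}\<close> \<open>m' \<in> {..n}\<close> by (auto simp: threshold_coloring_def max_def)
    with eq show False by simp
  qed
qed

lemma eq_threshold_coloring:
  assumes c: "c \<in> {1..n} \<rightarrow>\<^sub>E {1, 2}"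
    and mono: "\<forall>i\<in>{1..n}. \<forall>j\<in>{1..n}. i < j \<longrightarrow> c i = 1 \<longrightarrow> c j \<noteq> 2"
  obtains m where "m \<le> n" "c = threshold_coloring n m"
proof
  define T where "T = {i \<in> {1..n}. c i = 2}"
  define m where "m = Max (insert 0 T)"
  have fin: "finite (insert 0 T)" by (simp add: T_def)
  show "m \<le> n" unfolding m_def using fin by (subst Max_le_iff) (auto simp: T_def)
  have m_T: "m = 0 \<or> m \<in> T" unfolding m_def using Max_in[OF fin] by auto
  have c_i: "c i \<in> {1, 2}" if "i \<in> {1..n}" for i using c that by auto
  have "c i = (if i \<le> m then 2 else 1)" if i: "i \<in> {1..n}" for i
  proof (cases "i \<le> m")
    case True
    \<comment> \<open>\<open>m\<close> is the last element coloured 2, and no 1 precedes a 2\<close>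
    then have "m \<in> T" using m_T i by auto
    then have m: "m \<in> {1..n}" "c m = 2" by (auto simp: T_def)
    have "c i \<noteq> 1"
    proof (cases "i = m")
      case False
      then show ?thesis using mono i m True by fastforce
    qed (use m in simp)
    then show ?thesis using True c_i[OF i] by auto
  next
    case False
    then have "i \<notin> T" using fin by (auto simp: m_def)
    then show ?thesis using False c_i[OF i] i by (auto simp: T_def)
  qed
  then show "c = threshold_coloring n m"
    using c by (intro PiE_ext[OF c threshold_coloring_PiE]) (simp add: threshold_coloring_def)
qed

lemma not_contains_1112_1122_iff:
  "\<not> contains_1112 n (P, c) \<and> \<not> contains_1122 n (P, c) \<longleftrightarrow>
     (\<forall>i\<in>{1..n}. \<forall>j\<in>{1..n}. i < j \<longrightarrow> c i = 1 \<longrightarrow> c j \<noteq> 2)"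
  unfolding contains_1112_def contains_1122_def by auto

lemma not_contains_1111_threshold_coloring_iff:
  assumes m: "m \<le> n" and P: "partition_on {1..n} P"
  shows "\<not> contains_1111 n (P, threshold_coloring n m) \<longleftrightarrow>
           P \<in> matching_partitions {1..m} {Suc m..n}"
proof -
  have split: "{1..m} \<union> {Suc m..n} = {1..n}" using m by auto
  have blocks: "B \<subseteq> {1..n}" if "B \<in> P" for B using P that by (auto simp: partition_on_def)
  have "P \<in> matching_partitions {1..m} {Suc m..n} \<longleftrightarrow>
          (\<forall>B\<in>P. \<forall>x\<in>B. \<forall>y\<in>B. x \<noteq> y \<longrightarrow> (x \<in> {1..m} \<longleftrightarrow> y \<notin> {1..m}))"
    using P split by (intro matching_partitions_iff) auto
  also have "\<dots> \<longleftrightarrow> (\<forall>B\<in>P. \<forall>x\<in>B. \<forall>y\<in>B. x \<noteq> y \<longrightarrow>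
                              threshold_coloring n m x \<noteq> threshold_coloring n m y)"
  proof -
    have "(x \<in> {1..m} \<longleftrightarrow> y \<notin> {1..m}) \<longleftrightarrow>
            threshold_coloring n m x \<noteq> threshold_coloring n m y"
      if "B \<in> P" "x \<in> B" "y \<in> B" for B x y
      using blocks[OF that(1)] that(2,3) by (auto simp: threshold_coloring_def)
    then show ?thesis by blast
  qed
  also have "\<dots> \<longleftrightarrow> \<not> contains_1111 n (P, threshold_coloring n m)"
    unfolding contains_1111_def same_block_def using blocks by blast
  finally show ?thesis by simp
qed

lemma pattern_avoiders_eq:
  "{\<sigma> \<in> colored_partitions n.
      \<not> contains_1111 n \<sigma> \<and> \<not> contains_1112 n \<sigma> \<and> \<not> contains_1122 n \<sigma>}
   = (\<lambda>(m, P). (P, threshold_coloring n m)) `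
       (SIGMA m:{..n}. matching_partitions {1..m} {Suc m..n})"
  (is "?avoiders = ?image")
proof
  show "?avoiders \<subseteq> ?image"
  proof
    fix \<sigma> assume "\<sigma> \<in> ?avoiders"
    moreover obtain P c where \<sigma>: "\<sigma> = (P, c)" by fastforce
    ultimately have "(P, c) \<in> colored_partitions n" and avoids:
      "\<not> contains_1111 n (P, c)" "\<not> contains_1112 n (P, c)" "\<not> contains_1122 n (P, c)"
      by simp_all
    then have P: "partition_on {1..n} P" and c: "c \<in> {1..n} \<rightarrow>\<^sub>E {1, 2}"
      by (auto simp: colored_partitions_def)
    obtain m where m: "m \<le> n" "c = threshold_coloring n m"
      using eq_threshold_coloring[OF c] avoids not_contains_1112_1122_iff by metis
    then have "P \<in> matching_partitions {1..m} {Suc m..n}"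
      using not_contains_1111_threshold_coloring_iff[OF m(1) P] avoids by simp
    then show "\<sigma> \<in> ?image" using m \<sigma> by force
  qed
next
  show "?image \<subseteq> ?avoiders"
  proof
    fix \<sigma> assume "\<sigma> \<in> ?image"
    then obtain m P where \<sigma>: "\<sigma> = (P, threshold_coloring n m)"
      and m: "m \<le> n" and P: "P \<in> matching_partitions {1..m} {Suc m..n}"
      by auto
    have "{1..m} \<union> {Suc m..n} = {1..n}" using m by auto
    then have "partition_on {1..n} P" using P by (simp add: matching_partitions_def)
    moreover have "\<not> contains_1112 n (P, threshold_coloring n m) \<and>
                   \<not> contains_1122 n (P, threshold_coloring n m)"
      unfolding not_contains_1112_1122_iff by (auto simp: threshold_coloring_def)
    ultimately show "\<sigma> \<in> ?avoiders"
      using not_contains_1111_threshold_coloring_iff m P threshold_coloring_PiE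
      by (auto simp: colored_partitions_def \<sigma>)
  qed
qed

theorem mainTheorem14:
  fixes n :: nat
  assumes "n \<ge> 1"
  shows "card {\<sigma> \<in> colored_partitions n.
            \<not> contains_1111 n \<sigma> \<and> \<not> contains_1112 n \<sigma> \<and> \<not> contains_1122 n \<sigma>}
         = (\<Sum>k = 0..n. (n choose k) * fact (k div 2))"
proof -
  have "inj_on (\<lambda>(m, P). (P, threshold_coloring n m))
          (SIGMA m:{..n}. matching_partitions {1..m} {Suc m..n})"
    using inj_on_threshold_coloring by (auto simp: inj_on_def)
  then have "card {\<sigma> \<in> colored_partitions n.
            \<not> contains_1111 n \<sigma> \<and> \<not> contains_1112 n \<sigma> \<and> \<not> contains_1122 n \<sigma>}
      = card (SIGMA m:{..n}. matching_partitions {1..m} {Suc m..n})"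
    unfolding pattern_avoiders_eq by (rule card_image)
  also have "\<dots> = (\<Sum>m\<le>n. bipartite_matchings m (n - m))"
    by (simp add: finite_matching_partitions card_matching_partitions)
  also have "\<dots> = (\<Sum>k = 0..n. (n choose k) * fact (k div 2))"
    by (rule sum_bipartite_matchings)
  finally show ?thesis .
qed

end
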